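(* Let $\mathcal G$ be a synchronous game. The assignment $p^i_a\mapsto\frac12(1-z^i_a)$ extends to a unital $*$-isomorphism from the synchronous algebra $\mathcal A(\mathcal G)$ onto the SynchBCS algebra $\mathscr B(\mathcal G)$, whose inverse is determined by $z^i_a\mapsto 1-2p^i_a$.
   Context: A synchronous game has finite input set $I$ (for both players), output set $A$ (for both players) and predicate $V:A\times A\times I\times I\to\{0,1\}$ with $V(a,b|i,i)=0$ whenever $a\neq b$. The synchronous algebra $\mathcal A(\mathcal G)$ is the universal unital complex $*$-algebra with generators $p^i_a$, $(i,a)\in I\times A$, and relations $(p^i_a)^2=p^i_a=(p^i_a)^*$; $\sum_{a\in A}p^i_a=1$ for each $i$; $p^i_ap^j_b=0$ whenever $V(a,b|i,j)=0$. The SynchBCS algebra $\mathscr B(\mathcal G)$ is the universal unital complex $*$-algebra with generators $z^i_a$, $(i,a)\in I\times A$, and relations: $z^i_a=(z^i_a)^*$; $(z^i_a)^2=1$; $\frac12(1+z^i_a+z^j_b-z^i_az^j_b)=1$ whenever $V(a,b|i,j)=0$; $\prod_{a\in A}z^i_a=-1$ for each $i$ (product in a fixed order of $A$); $z^i_az^i_{a'}=z^i_{a'}z^i_a$ for all $a,a'\in A$. *)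

theory Defs
  imports Complex_Main "HOL-Library.Function_Algebras"
begin

text \<open>Free unital complex *-algebra on a set of generators 'x, realised concretely as
finitely supported complex-valued functions on words over the letters
Inl x (the generator x) and Inr x (its adjoint x*).  Addition, subtraction and zero are
pointwise (Function_Algebras); multiplication is concatenation-convolution.\<close>

type_synonym 'x fsa = "('x + 'x) list \<Rightarrow> complex"

definition ncpoly :: "'x fsa set" where
  "ncpoly = {f. finite {w. f w \<noteq> 0}}"

definition fone :: "'x fsa" where
  "fone = (\<lambda>w. if w = [] then 1 else 0)"

definition gen :: "'x \<Rightarrow> 'x fsa" where
  "gen x = (\<lambda>w. if w = [Inl x] then 1 else 0)"

definition fscale :: "complex \<Rightarrow> 'x fsa \<Rightarrow> 'x fsa" where
  "fscale c f = (\<lambda>w. c * f w)"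

definition fmul :: "'x fsa \<Rightarrow> 'x fsa \<Rightarrow> 'x fsa" where
  "fmul f g = (\<lambda>w. \<Sum>k\<le>length w. f (take k w) * g (drop k w))"

fun flip :: "'x + 'x \<Rightarrow> 'x + 'x" where
  "flip (Inl x) = Inr x"
| "flip (Inr x) = Inl x"

definition fstar :: "'x fsa \<Rightarrow> 'x fsa" where
  "fstar f = (\<lambda>w. cnj (f (rev (map flip w))))"

fun letter_img :: "('x \<Rightarrow> 'y fsa) \<Rightarrow> 'x + 'x \<Rightarrow> 'y fsa" where
  "letter_img h (Inl x) = h x"
| "letter_img h (Inr x) = fstar (h x)"

definition word_img :: "('x \<Rightarrow> 'y fsa) \<Rightarrow> ('x + 'x) list \<Rightarrow> 'y fsa" where
  "word_img h w = foldr (\<lambda>l acc. fmul (letter_img h l) acc) w fone"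

definition subst :: "('x \<Rightarrow> 'y fsa) \<Rightarrow> 'x fsa \<Rightarrow> 'y fsa" where
  "subst h f = (\<Sum>w\<in>{w. f w \<noteq> 0}. fscale (f w) (word_img h w))"

inductive_set star_ideal :: "'x fsa set \<Rightarrow> 'x fsa set" for R where
  rel: "r \<in> R \<Longrightarrow> r \<in> star_ideal R"
| zero: "0 \<in> star_ideal R"
| add: "a \<in> star_ideal R \<Longrightarrow> b \<in> star_ideal R \<Longrightarrow> a + b \<in> star_ideal R"
| smult: "a \<in> star_ideal R \<Longrightarrow> fscale c a \<in> star_ideal R"
| lmul: "a \<in> star_ideal R \<Longrightarrow> x \<in> ncpoly \<Longrightarrow> fmul x a \<in> star_ideal R"
| rmul: "a \<in> star_ideal R \<Longrightarrow> x \<in> ncpoly \<Longrightarrow> fmul a x \<in> star_ideal R"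
| star: "a \<in> star_ideal R \<Longrightarrow> fstar a \<in> star_ideal R"

text \<open>Relators (lhs - rhs) of the synchronous algebra; generator (i,a) is p^i_a.
  V a b i j = True means V(a,b|i,j) = 1.\<close>

definition sync_rels :: "('a \<Rightarrow> 'a \<Rightarrow> 'i \<Rightarrow> 'i \<Rightarrow> bool) \<Rightarrow> ('i \<times> 'a::finite) fsa set" where
  "sync_rels V =
     {fmul (gen (i,a)) (gen (i,a)) - gen (i,a) | i a. True}
   \<union> {gen (i,a) - fstar (gen (i,a)) | i a. True}
   \<union> {(\<Sum>a\<in>UNIV. gen (i,a)) - fone | i. True}
   \<union> {fmul (gen (i,a)) (gen (j,b)) | i j a b. \<not> V a b i j}"

text \<open>Relators of the SynchBCS algebra; generator (i,a) is z^i_a.  The product over A is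
  taken in the fixed (increasing) order of the linear order on A.\<close>

definition bcs_rels :: "('a \<Rightarrow> 'a \<Rightarrow> 'i \<Rightarrow> 'i \<Rightarrow> bool) \<Rightarrow> ('i \<times> 'a::{finite,linorder}) fsa set" where
  "bcs_rels V =
     {gen (i,a) - fstar (gen (i,a)) | i a. True}
   \<union> {fmul (gen (i,a)) (gen (i,a)) - fone | i a. True}
   \<union> {fscale (1/2) (fone + gen (i,a) + gen (j,b) - fmul (gen (i,a)) (gen (j,b))) - fone
        | i j a b. \<not> V a b i j}
   \<union> {foldr fmul (map (\<lambda>a. gen (i,a)) (sorted_list_of_set (UNIV :: 'a set))) fone + fone | i. True}
   \<union> {fmul (gen (i,a)) (gen (i,a')) - fmul (gen (i,a')) (gen (i,a)) | i a a'. True}"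

text \<open>The assignments h (on generators of the first algebra) and k (on generators of the
  second) extend to mutually inverse unital *-isomorphisms F/J1 \<rightarrow> F/J2 and back.\<close>

definition induces_star_iso :: "'x fsa set \<Rightarrow> 'y fsa set \<Rightarrow> ('x \<Rightarrow> 'y fsa) \<Rightarrow> ('y \<Rightarrow> 'x fsa) \<Rightarrow> bool" where
  "induces_star_iso J1 J2 h k \<longleftrightarrow>
     (\<forall>f\<in>J1. subst h f \<in> J2) \<and> (\<forall>g\<in>J2. subst k g \<in> J1) \<and>
     (\<forall>f\<in>ncpoly. subst k (subst h f) - f \<in> J1) \<and>
     (\<forall>g\<in>ncpoly. subst h (subst k g) - g \<in> J2)"

end

theory Submission
  imports Defs
begin

text \<open>Both assignments extend to substitution endomorphisms of the free *-algebras, and they are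
inverse to each other already on the generators (\<open>1 - 2\<cdot>(1 - z)/2 = z\<close> and
\<open>(1 - (1 - 2p))/2 = p\<close>), hence on the free algebras.  So it only remains to see that each
maps the relators of one algebra into the ideal of the other.  With \<open>p = (1 - z)/2\<close> one has
\<open>p\<^sup>2 - p = (z\<^sup>2 - 1)/4\<close> and \<open>p p' = (1 - z)(1 - z')/4\<close>, so idempotence matches \<open>z\<^sup>2 = 1\<close> and
the orthogonality relations match the relations \<open>(1 + z + z' - z z')/2 = 1\<close>.  Synchronicity
makes the \<open>p\<^sup>i\<^sub>a\<close> for fixed \<open>i\<close> pairwise orthogonal, which gives the commutation relations and
turns the product \<open>\<Prod>\<^sub>a (1 - 2 p\<^sup>i\<^sub>a)\<close> into \<open>1 - 2 \<Sum>\<^sub>a p\<^sup>i\<^sub>a\<close>; thus \<open>\<Sum>\<^sub>a p\<^sup>i\<^sub>a = 1\<close> corresponds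
to \<open>\<Prod>\<^sub>a z\<^sup>i\<^sub>a = -1\<close>.\<close>

section \<open>Arithmetic in the free *-algebra\<close>

lemma sum_fun_apply: "(\<Sum>i\<in>S. F i) w = (\<Sum>i\<in>S. F i w)"
  for F :: "'b \<Rightarrow> 'x fsa"
  by (induction S rule: infinite_finite_induct) auto

definition word_delta :: "('x + 'x) list \<Rightarrow> 'x fsa" where
  "word_delta u = (\<lambda>v. if v = u then 1 else 0)"

lemma fscale_apply: "fscale c f w = c * f w"
  by (simp add: fscale_def)

lemma fsa_eq_sum_word_delta:
  assumes "finite S" "{w. f w \<noteq> 0} \<subseteq> S"
  shows "f = (\<Sum>w\<in>S. fscale (f w) (word_delta w))"
proof (rule ext)
  fix v
  have "(\<Sum>w\<in>S. fscale (f w) (word_delta w)) v = (\<Sum>w\<in>S. if v = w then f v else 0)"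
    unfolding sum_fun_apply by (rule sum.cong) (auto simp: word_delta_def fscale_apply)
  also have "\<dots> = f v"
    using assms by (auto simp: sum.delta)
  finally show "f v = (\<Sum>w\<in>S. fscale (f w) (word_delta w)) v"
    by simp
qed

lemma ncpoly_eq_sum_word_delta:
  "f \<in> ncpoly \<Longrightarrow> f = (\<Sum>w\<in>{w. f w \<noteq> 0}. fscale (f w) (word_delta w))"
  by (rule fsa_eq_sum_word_delta) (auto simp: ncpoly_def)

lemma fscale_one [simp]: "fscale 1 f = f"
  by (rule ext) (simp add: fscale_apply)

lemma fscale_zero_right [simp]: "fscale c 0 = 0"
  by (rule ext) (simp add: fscale_apply)

lemma fscale_fscale: "fscale c (fscale d f) = fscale (c * d) f"
  by (rule ext) (simp add: fscale_apply)

lemma fscale_sum: "fscale c (\<Sum>i\<in>S. F i) = (\<Sum>i\<in>S. fscale c (F i))"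
  by (rule ext) (simp add: fscale_apply sum_fun_apply sum_distrib_left)

lemma fscale_add_left: "fscale (a + b) f = fscale a f + fscale b f"
  by (rule ext) (simp add: fscale_apply distrib_right)

lemma fscale_diff_left: "fscale (a - b) f = fscale a f - fscale b f"
  by (rule ext) (simp add: fscale_apply left_diff_distrib)

lemma fmul_add_left: "fmul (f + g) h = fmul f h + fmul g h"
  by (rule ext) (simp add: fmul_def distrib_right sum.distrib)

lemma fmul_add_right: "fmul h (f + g) = fmul h f + fmul h g"
  by (rule ext) (simp add: fmul_def distrib_left sum.distrib)

lemma fmul_diff_left: "fmul (f - g) h = fmul f h - fmul g h"
  by (rule ext) (simp add: fmul_def left_diff_distrib sum_subtractf)

lemma fmul_diff_right: "fmul h (f - g) = fmul h f - fmul h g"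
  by (rule ext) (simp add: fmul_def right_diff_distrib sum_subtractf)

lemma fmul_fscale_left: "fmul (fscale c f) h = fscale c (fmul f h)"
  by (rule ext) (simp add: fmul_def fscale_apply sum_distrib_left mult.assoc)

lemma fmul_fscale_right: "fmul h (fscale c f) = fscale c (fmul h f)"
  by (rule ext) (simp add: fmul_def fscale_apply sum_distrib_left mult.left_commute)

lemma fmul_sum_left: "fmul (\<Sum>i\<in>S. F i) h = (\<Sum>i\<in>S. fmul (F i) h)"
  by (rule ext) (simp add: fmul_def sum_fun_apply sum_distrib_right sum.swap[where A=S])

lemma fmul_sum_right: "fmul h (\<Sum>i\<in>S. F i) = (\<Sum>i\<in>S. fmul h (F i))"
  by (rule ext) (simp add: fmul_def sum_fun_apply sum_distrib_left sum.swap[where A=S])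

lemmas fmul_linear_simps =
  fmul_sum_left fmul_sum_right fmul_fscale_left fmul_fscale_right fscale_fscale fscale_sum

lemma fone_eq_word_delta: "fone = word_delta []"
  by (simp add: fone_def word_delta_def fun_eq_iff)

lemma gen_eq_word_delta: "gen x = word_delta [Inl x]"
  by (simp add: gen_def word_delta_def)

lemma fmul_word_delta: "fmul (word_delta u) (word_delta v) = word_delta (u @ v)"
proof (rule ext)
  fix w
  have "fmul (word_delta u) (word_delta v) w =
      (\<Sum>k\<le>length w. if k = length u \<and> w = u @ v then 1 else 0)"
    unfolding fmul_def word_delta_def
  proof (rule sum.cong)
    fix k assume "k \<in> {..length w}"
    then have "(take k w = u \<and> drop k w = v) = (k = length u \<and> w = u @ v)"
      by (metis append_take_drop_id append_eq_conv_conj length_take min_absorb2 atMost_iff)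
    then show "(if take k w = u then 1 else 0) * (if drop k w = v then 1 else 0) =
        (if k = length u \<and> w = u @ v then 1 else (0::complex))"
      by auto
  qed simp
  also have "\<dots> = word_delta (u @ v) w"
    by (auto simp: word_delta_def)
  finally show "fmul (word_delta u) (word_delta v) w = word_delta (u @ v) w" .
qed

lemma fmul_fone_left: "fmul fone g = g"
proof (rule ext)
  fix w
  have "fmul fone g w = (\<Sum>k\<le>length w. if k = 0 then g w else 0)"
    unfolding fmul_def fone_def by (rule sum.cong) auto
  then show "fmul fone g w = g w"
    by (simp add: sum.delta)
qed

lemma fmul_fone_right: "fmul g fone = g"
proof (rule ext)
  fix w
  have "fmul g fone w = (\<Sum>k\<le>length w. if k = length w then g w else 0)"
    unfolding fmul_def fone_def by (rule sum.cong) auto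
  then show "fmul g fone w = g w"
    by (simp add: sum.delta)
qed

lemma ncpoly_zero [simp]: "0 \<in> ncpoly"
  by (simp add: ncpoly_def)

lemma ncpoly_add [simp]: "f \<in> ncpoly \<Longrightarrow> g \<in> ncpoly \<Longrightarrow> f + g \<in> ncpoly"
  unfolding ncpoly_def
  by (rule CollectI, rule finite_subset[of _ "{w. f w \<noteq> 0} \<union> {w. g w \<noteq> 0}"]) auto

lemma ncpoly_diff [simp]: "f \<in> ncpoly \<Longrightarrow> g \<in> ncpoly \<Longrightarrow> f - g \<in> ncpoly"
  unfolding ncpoly_def
  by (rule CollectI, rule finite_subset[of _ "{w. f w \<noteq> 0} \<union> {w. g w \<noteq> 0}"]) auto

lemma ncpoly_fscale [simp]: "f \<in> ncpoly \<Longrightarrow> fscale c f \<in> ncpoly"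
  unfolding ncpoly_def
  by (rule CollectI, rule finite_subset[of _ "{w. f w \<noteq> 0}"]) (auto simp: fscale_apply)

lemma ncpoly_sum [simp]: "(\<And>i. i \<in> S \<Longrightarrow> F i \<in> ncpoly) \<Longrightarrow> (\<Sum>i\<in>S. F i) \<in> ncpoly"
  by (induction S rule: infinite_finite_induct) auto

lemma ncpoly_word_delta [simp]: "word_delta u \<in> ncpoly"
  unfolding ncpoly_def
  by (rule CollectI, rule finite_subset[of _ "{u}"]) (auto simp: word_delta_def)

lemma ncpoly_fone [simp]: "fone \<in> ncpoly"
  by (simp add: fone_eq_word_delta)

lemma ncpoly_gen [simp]: "gen x \<in> ncpoly"
  by (simp add: gen_eq_word_delta)

lemma finite_support_ncpoly: "f \<in> ncpoly \<Longrightarrow> finite {w. f w \<noteq> 0}"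
  by (simp add: ncpoly_def)

lemma fmul_ncpoly_eq_sum:
  assumes f: "f \<in> ncpoly" and g: "g \<in> ncpoly"
  shows "fmul f g =
    (\<Sum>u\<in>{w. f w \<noteq> 0}. \<Sum>v\<in>{w. g w \<noteq> 0}. fscale (f u * g v) (word_delta (u @ v)))"
proof -
  have "fmul f g = fmul (\<Sum>u\<in>{w. f w \<noteq> 0}. fscale (f u) (word_delta u))
      (\<Sum>v\<in>{w. g w \<noteq> 0}. fscale (g v) (word_delta v))"
    using ncpoly_eq_sum_word_delta[OF f] ncpoly_eq_sum_word_delta[OF g] by (rule arg_cong2)
  also have "\<dots> =
      (\<Sum>u\<in>{w. f w \<noteq> 0}. \<Sum>v\<in>{w. g w \<noteq> 0}. fscale (f u * g v) (word_delta (u @ v)))"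
    unfolding fmul_sum_left by (simp add: fmul_linear_simps fmul_word_delta ac_simps)
  finally show ?thesis .
qed

lemma ncpoly_fmul [simp]: "f \<in> ncpoly \<Longrightarrow> g \<in> ncpoly \<Longrightarrow> fmul f g \<in> ncpoly"
  by (simp add: fmul_ncpoly_eq_sum)

lemma ncpoly_foldr_fmul [simp]:
  "(\<And>a. F a \<in> ncpoly) \<Longrightarrow> foldr fmul (map F L) fone \<in> ncpoly"
  by (induction L) auto

lemma fmul_assoc:
  assumes f: "f \<in> ncpoly" and g: "g \<in> ncpoly" and h: "h \<in> ncpoly"
  shows "fmul (fmul f g) h = fmul f (fmul g h)"
proof -
  let ?f = "\<Sum>u\<in>{w. f w \<noteq> 0}. fscale (f u) (word_delta u)"
  let ?g = "\<Sum>v\<in>{w. g w \<noteq> 0}. fscale (g v) (word_delta v)"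
  let ?h = "\<Sum>y\<in>{w. h w \<noteq> 0}. fscale (h y) (word_delta y)"
  have "fmul (fmul ?f ?g) ?h = fmul ?f (fmul ?g ?h)"
    by (simp add: fmul_linear_simps fmul_word_delta ac_simps)
  then show ?thesis
    using ncpoly_eq_sum_word_delta[OF f] ncpoly_eq_sum_word_delta[OF g]
      ncpoly_eq_sum_word_delta[OF h]
    by simp
qed

definition adj_word :: "('x + 'x) list \<Rightarrow> ('x + 'x) list" where
  "adj_word w = rev (map flip w)"

lemma flip_flip [simp]: "flip (flip l) = l"
  by (cases l) auto

lemma adj_word_adj_word [simp]: "adj_word (adj_word w) = w"
  by (simp add: adj_word_def rev_map comp_def)

lemma adj_word_append: "adj_word (u @ v) = adj_word v @ adj_word u"
  by (simp add: adj_word_def)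

lemma fstar_apply: "fstar f w = cnj (f (adj_word w))"
  by (simp add: fstar_def adj_word_def)

lemma fstar_add: "fstar (f + g) = fstar f + fstar g"
  by (rule ext) (simp add: fstar_apply)

lemma fstar_diff: "fstar (f - g) = fstar f - fstar g"
  by (rule ext) (simp add: fstar_apply)

lemma fstar_fscale: "fstar (fscale c f) = fscale (cnj c) (fstar f)"
  by (rule ext) (simp add: fstar_apply fscale_apply)

lemma fstar_sum: "fstar (\<Sum>i\<in>S. F i) = (\<Sum>i\<in>S. fstar (F i))"
  by (rule ext) (simp add: fstar_apply sum_fun_apply)

lemma fstar_word_delta: "fstar (word_delta u) = word_delta (adj_word u)"
  by (rule ext) (auto simp: fstar_apply word_delta_def)

lemma fstar_fone: "fstar fone = fone"
  by (simp add: fone_eq_word_delta fstar_word_delta adj_word_def)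

lemma fstar_fstar: "fstar (fstar f) = f"
  by (rule ext) (simp add: fstar_apply)

lemma ncpoly_fstar [simp]: "f \<in> ncpoly \<Longrightarrow> fstar f \<in> ncpoly"
  unfolding ncpoly_def
  by (rule CollectI, rule finite_subset[of _ "adj_word ` {w. f w \<noteq> 0}"])
    (auto simp: fstar_apply intro!: image_eqI[where x="adj_word _"])

lemma fstar_fmul:
  assumes f: "f \<in> ncpoly" and g: "g \<in> ncpoly"
  shows "fstar (fmul f g) = fmul (fstar g) (fstar f)"
proof -
  have "fstar (fmul f g) = (\<Sum>u\<in>{w. f w \<noteq> 0}. \<Sum>v\<in>{w. g w \<noteq> 0}.
      fscale (cnj (g v) * cnj (f u)) (word_delta (adj_word v @ adj_word u)))"
    by (simp add: fmul_ncpoly_eq_sum[OF f g] fstar_sum fstar_fscale fstar_word_delta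
        adj_word_append mult.commute)
  also have "\<dots> = (\<Sum>v\<in>{w. g w \<noteq> 0}. \<Sum>u\<in>{w. f w \<noteq> 0}.
      fscale (cnj (g v) * cnj (f u)) (word_delta (adj_word v @ adj_word u)))"
    by (rule sum.swap)
  also have "\<dots> = fmul (fstar (\<Sum>v\<in>{w. g w \<noteq> 0}. fscale (g v) (word_delta v)))
      (fstar (\<Sum>u\<in>{w. f w \<noteq> 0}. fscale (f u) (word_delta u)))"
    unfolding fstar_sum fmul_sum_left by (simp add: fstar_sum fstar_fscale fstar_word_delta fmul_linear_simps fmul_word_delta ac_simps)
  finally show ?thesis
    using ncpoly_eq_sum_word_delta[OF f] ncpoly_eq_sum_word_delta[OF g] by simp
qed

lemmas fsa_ring_simps =
  fmul_diff_left fmul_diff_right fmul_add_left fmul_add_right fmul_fscale_left fmul_fscale_right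
  fmul_fone_left fmul_fone_right fstar_diff fstar_add fstar_fscale fstar_fone

section \<open>Substitution homomorphisms\<close>

lemma word_img_Nil [simp]: "word_img h [] = fone"
  by (simp add: word_img_def)

lemma word_img_Cons [simp]: "word_img h (l # w) = fmul (letter_img h l) (word_img h w)"
  by (simp add: word_img_def)

context
  fixes h :: "'x \<Rightarrow> 'y fsa"
  assumes h_ncpoly: "\<And>x. h x \<in> ncpoly"
begin

lemma ncpoly_letter_img [simp]: "letter_img h l \<in> ncpoly"
  by (cases l) (auto simp: h_ncpoly)

lemma ncpoly_word_img [simp]: "word_img h w \<in> ncpoly"
  by (induction w) auto

lemma word_img_append: "word_img h (u @ v) = fmul (word_img h u) (word_img h v)"
  by (induction u) (auto simp: fmul_fone_left fmul_assoc)

lemma word_img_adj_word: "word_img h (adj_word u) = fstar (word_img h u)"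
proof (induction u)
  case Nil
  then show ?case
    by (simp add: adj_word_def fstar_fone)
next
  case (Cons l u)
  have "letter_img h (flip l) = fstar (letter_img h l)"
    by (cases l) (auto simp: fstar_fstar)
  moreover have "adj_word (l # u) = adj_word u @ [flip l]"
    by (simp add: adj_word_def)
  ultimately show ?case
    using Cons by (simp add: word_img_append fmul_fone_right fstar_fmul)
qed

lemma subst_eq_sum_over:
  assumes "finite S" "{w. f w \<noteq> 0} \<subseteq> S"
  shows "subst h f = (\<Sum>w\<in>S. fscale (f w) (word_img h w))"
  unfolding subst_def by (rule sum.mono_neutral_left) (use assms in \<open>auto simp: fscale_apply\<close>)

lemma subst_eq_sum:
  "f \<in> ncpoly \<Longrightarrow> subst h f = (\<Sum>w\<in>{w. f w \<noteq> 0}. fscale (f w) (word_img h w))"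
  by (rule subst_eq_sum_over) (auto simp: finite_support_ncpoly)

lemma subst_add:
  assumes f: "f \<in> ncpoly" and g: "g \<in> ncpoly"
  shows "subst h (f + g) = subst h f + subst h g"
proof -
  let ?S = "{w. f w \<noteq> 0} \<union> {w. g w \<noteq> 0}"
  have S: "finite ?S"
    using finite_support_ncpoly[OF f] finite_support_ncpoly[OF g] by auto
  have "subst h (f + g) = (\<Sum>w\<in>?S. fscale ((f + g) w) (word_img h w))"
    by (rule subst_eq_sum_over[OF S]) auto
  then show ?thesis
    by (simp add: subst_eq_sum_over[OF S] fscale_add_left sum.distrib)
qed

lemma subst_diff:
  assumes f: "f \<in> ncpoly" and g: "g \<in> ncpoly"
  shows "subst h (f - g) = subst h f - subst h g"
proof -
  let ?S = "{w. f w \<noteq> 0} \<union> {w. g w \<noteq> 0}"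
  have S: "finite ?S"
    using finite_support_ncpoly[OF f] finite_support_ncpoly[OF g] by auto
  have "subst h (f - g) = (\<Sum>w\<in>?S. fscale ((f - g) w) (word_img h w))"
    by (rule subst_eq_sum_over[OF S]) auto
  then show ?thesis
    by (simp add: subst_eq_sum_over[OF S] fscale_diff_left sum_subtractf)
qed

lemma subst_fscale: "f \<in> ncpoly \<Longrightarrow> subst h (fscale c f) = fscale c (subst h f)"
  using subst_eq_sum_over[of "{w. f w \<noteq> 0}" f] subst_eq_sum_over[of "{w. f w \<noteq> 0}" "fscale c f"]
  by (auto simp: finite_support_ncpoly fscale_sum fscale_fscale fscale_apply)

lemma subst_zero [simp]: "subst h 0 = 0"
  by (simp add: subst_def)

lemma subst_sum:
  "(\<And>i. i \<in> I \<Longrightarrow> F i \<in> ncpoly) \<Longrightarrow> subst h (\<Sum>i\<in>I. F i) = (\<Sum>i\<in>I. subst h (F i))"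
  by (induction I rule: infinite_finite_induct) (auto simp: subst_add)

lemma subst_word_delta: "subst h (word_delta w) = word_img h w"
  using subst_eq_sum_over[of "{w}" "word_delta w"] by (simp add: word_delta_def fscale_apply)

lemma ncpoly_subst [simp]: "subst h f \<in> ncpoly"
  unfolding subst_def by simp

lemma subst_fone: "subst h fone = fone"
  by (simp add: fone_eq_word_delta subst_word_delta)

lemma subst_gen: "subst h (gen x) = h x"
  by (simp add: gen_eq_word_delta subst_word_delta fmul_fone_right)

lemma subst_fmul:
  assumes f: "f \<in> ncpoly" and g: "g \<in> ncpoly"
  shows "subst h (fmul f g) = fmul (subst h f) (subst h g)"
proof -
  have "subst h (fmul f g) = (\<Sum>u\<in>{w. f w \<noteq> 0}. \<Sum>v\<in>{w. g w \<noteq> 0}.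
      fscale (f u * g v) (word_img h (u @ v)))"
    by (simp add: fmul_ncpoly_eq_sum[OF f g] subst_sum subst_fscale subst_word_delta)
  also have "\<dots> = fmul (subst h f) (subst h g)"
    unfolding subst_eq_sum[OF f] subst_eq_sum[OF g] fmul_sum_left
    by (simp add: fmul_linear_simps word_img_append ac_simps)
  finally show ?thesis .
qed

lemma subst_fstar:
  assumes f: "f \<in> ncpoly"
  shows "subst h (fstar f) = fstar (subst h f)"
proof -
  have "fstar f = (\<Sum>u\<in>{w. f w \<noteq> 0}. fscale (cnj (f u)) (word_delta (adj_word u)))"
    by (subst ncpoly_eq_sum_word_delta[OF f]) (simp add: fstar_sum fstar_fscale fstar_word_delta)
  then show ?thesis
    by (simp add: subst_sum subst_fscale subst_word_delta subst_eq_sum[OF f] fstar_sum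
        fstar_fscale word_img_adj_word)
qed

lemma subst_foldr_fmul:
  "(\<And>a. F a \<in> ncpoly) \<Longrightarrow>
    subst h (foldr fmul (map F L) fone) = foldr fmul (map (\<lambda>a. subst h (F a)) L) fone"
  by (induction L) (auto simp: subst_fone subst_fmul)

end

lemma subst_word_img:
  assumes h: "\<And>x. h x \<in> ncpoly" and k: "\<And>x. k x \<in> ncpoly"
  shows "subst k (word_img h w) = word_img (\<lambda>x. subst k (h x)) w"
proof (induction w)
  case Nil
  then show ?case
    by (simp add: subst_fone k)
next
  case (Cons l w)
  have "subst k (letter_img h l) = letter_img (\<lambda>x. subst k (h x)) l"
    by (cases l) (auto simp: subst_fstar h k)
  then show ?case
    using Cons by (simp add: subst_fmul h k)
qed

lemma subst_subst:
  assumes h: "\<And>x. h x \<in> ncpoly" and k: "\<And>x. k x \<in> ncpoly" and f: "f \<in> ncpoly"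
  shows "subst k (subst h f) = subst (\<lambda>x. subst k (h x)) f"
proof -
  have "subst k (subst h f) = (\<Sum>w\<in>{w. f w \<noteq> 0}. fscale (f w) (subst k (word_img h w)))"
    by (simp add: subst_eq_sum[OF h f] subst_sum[OF k] subst_fscale[OF k] h)
  also have "\<dots> = subst (\<lambda>x. subst k (h x)) f"
    by (simp add: subst_eq_sum[OF _ f] subst_word_img[OF h k] k)
  finally show ?thesis .
qed

lemma word_img_gen: "word_img gen w = word_delta w"
proof (induction w)
  case Nil
  then show ?case
    by (simp add: fone_eq_word_delta)
next
  case (Cons l w)
  have "letter_img gen l = word_delta [l]"
    by (cases l) (auto simp: gen_eq_word_delta fstar_word_delta adj_word_def)
  then show ?case
    using Cons by (simp add: fmul_word_delta)
qed

lemma subst_gen_ncpoly: "f \<in> ncpoly \<Longrightarrow> subst gen f = f"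
  by (simp add: subst_eq_sum word_img_gen ncpoly_eq_sum_word_delta[symmetric])

section \<open>Ideals and quotient isomorphisms\<close>

lemma ncpoly_of_star_ideal:
  assumes "R \<subseteq> ncpoly" and "a \<in> star_ideal R"
  shows "a \<in> ncpoly"
  using assms(2)
  by induction
    (use assms(1) in \<open>blast intro: ncpoly_zero ncpoly_add ncpoly_fscale ncpoly_fmul ncpoly_fstar\<close>)+

lemma star_ideal_diff: "a \<in> star_ideal R \<Longrightarrow> b \<in> star_ideal R \<Longrightarrow> a - b \<in> star_ideal R"
proof -
  assume a: "a \<in> star_ideal R" and b: "b \<in> star_ideal R"
  have "a - b = a + fscale (-1) b"
    by (rule ext) (simp add: fscale_apply)
  then show ?thesis
    by (simp only: star_ideal.add star_ideal.smult a b)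
qed

lemma star_ideal_sum:
  "(\<And>i. i \<in> S \<Longrightarrow> F i \<in> star_ideal R) \<Longrightarrow> (\<Sum>i\<in>S. F i) \<in> star_ideal R"
  by (induction S rule: infinite_finite_induct) (auto intro: star_ideal.zero star_ideal.add)

lemma subst_star_ideal:
  assumes h: "\<And>x. h x \<in> ncpoly" and R: "R \<subseteq> ncpoly"
    and rels: "\<And>r. r \<in> R \<Longrightarrow> subst h r \<in> star_ideal R'"
    and a: "a \<in> star_ideal R"
  shows "subst h a \<in> star_ideal R'"
  using a
proof (induction rule: star_ideal.induct)
  case (rel r)
  then show ?case by (rule rels)
next
  case zero
  then show ?case by (simp only: subst_zero[OF h] star_ideal.zero)
next
  case (add a b)
  then show ?case
    using ncpoly_of_star_ideal[OF R] by (simp only: subst_add[OF h] star_ideal.add)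
next
  case (smult a c)
  then show ?case
    using ncpoly_of_star_ideal[OF R] by (simp only: subst_fscale[OF h] star_ideal.smult)
next
  case (lmul a x)
  then show ?case
    using ncpoly_of_star_ideal[OF R] by (simp only: subst_fmul[OF h] star_ideal.lmul ncpoly_subst[OF h])
next
  case (rmul a x)
  then show ?case
    using ncpoly_of_star_ideal[OF R] by (simp only: subst_fmul[OF h] star_ideal.rmul ncpoly_subst[OF h])
next
  case (star a)
  then show ?case
    using ncpoly_of_star_ideal[OF R] by (simp only: subst_fstar[OF h] star_ideal.star)
qed

lemma induces_star_iso_if_inverse_on_gen:
  assumes h: "\<And>x. h x \<in> ncpoly" and k: "\<And>y. k y \<in> ncpoly"
    and R1: "R1 \<subseteq> ncpoly" and R2: "R2 \<subseteq> ncpoly"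
    and h_rels: "\<And>r. r \<in> R1 \<Longrightarrow> subst h r \<in> star_ideal R2"
    and k_rels: "\<And>r. r \<in> R2 \<Longrightarrow> subst k r \<in> star_ideal R1"
    and kh: "\<And>x. subst k (h x) = gen x" and hk: "\<And>y. subst h (k y) = gen y"
  shows "induces_star_iso (star_ideal R1) (star_ideal R2) h k"
proof -
  have "subst k (subst h f) = f" if "f \<in> ncpoly" for f
    using that by (simp add: subst_subst[OF h k] kh subst_gen_ncpoly)
  moreover have "subst h (subst k g) = g" if "g \<in> ncpoly" for g
    using that by (simp add: subst_subst[OF k h] hk subst_gen_ncpoly)
  ultimately show ?thesis
    unfolding induces_star_iso_def
    using subst_star_ideal[OF h R1 h_rels] subst_star_ideal[OF k R2 k_rels]
    by (simp add: star_ideal.zero)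
qed

section \<open>Projections versus symmetries\<close>

definition proj_of_sym :: "'x \<Rightarrow> 'x fsa" where
  "proj_of_sym x = fscale (1/2) (fone - gen x)"

definition sym_of_proj :: "'x \<Rightarrow> 'x fsa" where
  "sym_of_proj x = fone - fscale 2 (gen x)"

lemma ncpoly_proj_of_sym [simp]: "proj_of_sym x \<in> ncpoly"
  by (simp add: proj_of_sym_def)

lemma ncpoly_sym_of_proj [simp]: "sym_of_proj x \<in> ncpoly"
  by (simp add: sym_of_proj_def)

lemma subst_proj_of_sym_gen: "subst proj_of_sym (gen x) = fscale (1/2) (fone - gen x)"
  by (rule ext) (simp add: subst_gen proj_of_sym_def)

lemma subst_sym_of_proj_gen: "subst sym_of_proj (gen x) = fone - fscale 2 (gen x)"
  by (rule ext) (simp add: subst_gen sym_of_proj_def)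

lemma reflection_proj_of_sym: "fone - fscale 2 (proj_of_sym x) = gen x"
  by (rule ext) (simp add: proj_of_sym_def fscale_apply field_simps)

lemma subst_sym_of_proj_proj_of_sym: "subst sym_of_proj (proj_of_sym x) = gen x"
  by (rule ext) (simp add: proj_of_sym_def sym_of_proj_def subst_fscale subst_diff subst_fone
      subst_gen fscale_apply field_simps)

lemma subst_proj_of_sym_sym_of_proj: "subst proj_of_sym (sym_of_proj x) = gen x"
  by (rule ext) (simp add: proj_of_sym_def sym_of_proj_def subst_fscale subst_diff subst_fone
      subst_gen fscale_apply field_simps)

lemma prod_reflections_orthogonal:
  assumes q: "\<And>a. q a \<in> ncpoly"
    and orth: "\<And>a b. a \<noteq> b \<Longrightarrow> fmul (q a) (q b) \<in> star_ideal R"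
    and "distinct L"
  shows "foldr fmul (map (\<lambda>a. fone - fscale 2 (q a)) L) fone
      - (fone - fscale 2 (\<Sum>a\<in>set L. q a)) \<in> star_ideal R"
  using \<open>distinct L\<close>
proof (induction L)
  case Nil
  have "foldr fmul (map (\<lambda>a. fone - fscale 2 (q a)) []) fone
      - (fone - fscale 2 (\<Sum>a\<in>set []. q a)) = 0"
    by simp
  then show ?case
    by (simp only: star_ideal.zero)
next
  case (Cons a L)
  let ?X = "foldr fmul (map (\<lambda>a. fone - fscale 2 (q a)) L) fone"
  let ?S = "\<Sum>b\<in>set L. q b"
  have a_L: "a \<notin> set L" and "distinct L"
    using Cons.prems by auto
  note IH = Cons.IH[OF \<open>distinct L\<close>]
  have "foldr fmul (map (\<lambda>a. fone - fscale 2 (q a)) (a # L)) fone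
      - (fone - fscale 2 (\<Sum>b\<in>set (a # L). q b))
      = fmul (fone - fscale 2 (q a)) (?X - (fone - fscale 2 ?S)) + fscale 4 (fmul (q a) ?S)"
    using a_L by (intro ext) (simp add: fsa_ring_simps fscale_apply algebra_simps)
  moreover have "fmul (q a) ?S \<in> star_ideal R"
    unfolding fmul_sum_right by (rule star_ideal_sum, rule orth) (use a_L in auto)
  moreover have "fmul (fone - fscale 2 (q a)) (?X - (fone - fscale 2 ?S)) \<in> star_ideal R"
    by (rule star_ideal.lmul[OF IH]) (simp add: q)
  ultimately show ?case
    by (simp only: star_ideal.add star_ideal.smult)
qed

lemma sync_rels_ncpoly: "sync_rels V \<subseteq> ncpoly"
  unfolding sync_rels_def by auto

lemma bcs_rels_ncpoly: "bcs_rels V \<subseteq> ncpoly"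
  unfolding bcs_rels_def by auto

lemma sync_orthogonal:
  assumes "\<not> V a b i j"
  shows "fmul (gen (i,a)) (gen (j,b)) \<in> star_ideal (sync_rels V)"
  by (rule star_ideal.rel) (unfold sync_rels_def, use assms in blast)

lemma bcs_orthogonal:
  assumes "\<not> V a b i j"
  shows "fmul (proj_of_sym (i,a)) (proj_of_sym (j,b)) \<in> star_ideal (bcs_rels V)"
proof -
  let ?r = "fscale (1/2) (fone + gen (i,a) + gen (j,b) - fmul (gen (i,a)) (gen (j,b))) - fone"
  have "?r \<in> star_ideal (bcs_rels V)"
    by (rule star_ideal.rel) (unfold bcs_rels_def, use assms in blast)
  moreover have "fmul (proj_of_sym (i,a)) (proj_of_sym (j,b)) = fscale (-1/2) ?r"
    by (rule ext) (simp add: proj_of_sym_def fsa_ring_simps fscale_apply algebra_simps)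
  ultimately show ?thesis
    by (simp only: star_ideal.smult)
qed

locale synchronous_game =
  fixes V :: "'a::{finite,linorder} \<Rightarrow> 'a \<Rightarrow> 'i \<Rightarrow> 'i \<Rightarrow> bool"
  assumes synchronous: "\<And>a b i. a \<noteq> b \<Longrightarrow> \<not> V a b i i"
begin

abbreviation sync_ideal :: "('i \<times> 'a) fsa set" where
  "sync_ideal \<equiv> star_ideal (sync_rels V)"

abbreviation bcs_ideal :: "('i \<times> 'a) fsa set" where
  "bcs_ideal \<equiv> star_ideal (bcs_rels V)"

abbreviation answers :: "'a list" where
  "answers \<equiv> sorted_list_of_set UNIV"

lemma sync_prod_sym_of_proj:
  "foldr fmul (map (\<lambda>a. sym_of_proj (i,a)) answers) fone
    - (fone - fscale 2 (\<Sum>a\<in>UNIV. gen (i,a))) \<in> sync_ideal"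
  using prod_reflections_orthogonal[of "\<lambda>a. gen (i,a)" "sync_rels V" answers]
  by (simp add: sym_of_proj_def sync_orthogonal synchronous)

lemma bcs_prod_gen:
  "foldr fmul (map (\<lambda>a. gen (i,a)) answers) fone
    - (fone - fscale 2 (\<Sum>a\<in>UNIV. proj_of_sym (i,a))) \<in> bcs_ideal"
  using prod_reflections_orthogonal[of "\<lambda>a. proj_of_sym (i,a)" "bcs_rels V" answers]
  by (simp add: reflection_proj_of_sym bcs_orthogonal synchronous)

lemma subst_proj_of_sym_sync_rels:
  assumes "r \<in> sync_rels V"
  shows "subst proj_of_sym r \<in> bcs_ideal"
proof -
  have idempotent: "subst proj_of_sym (fmul (gen (i,a)) (gen (i,a)) - gen (i,a)) \<in> bcs_ideal"
    for i a
  proof -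
    have "fmul (gen (i,a)) (gen (i,a)) - fone \<in> bcs_ideal"
      by (rule star_ideal.rel) (unfold bcs_rels_def, blast)
    moreover have "subst proj_of_sym (fmul (gen (i,a)) (gen (i,a)) - gen (i,a))
        = fscale (1/4) (fmul (gen (i,a)) (gen (i,a)) - fone)"
      by (simp add: subst_diff subst_fmul subst_proj_of_sym_gen fsa_ring_simps)
        (rule ext, simp add: fscale_apply algebra_simps)
    ultimately show ?thesis
      by (simp only: star_ideal.smult)
  qed
  have self_adjoint: "subst proj_of_sym (gen (i,a) - fstar (gen (i,a))) \<in> bcs_ideal" for i a
  proof -
    have "gen (i,a) - fstar (gen (i,a)) \<in> bcs_ideal"
      by (rule star_ideal.rel) (unfold bcs_rels_def, blast)
    moreover have "subst proj_of_sym (gen (i,a) - fstar (gen (i,a)))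
        = fscale (-1/2) (gen (i,a) - fstar (gen (i,a)))"
      by (simp add: subst_diff subst_fstar subst_proj_of_sym_gen fsa_ring_simps)
        (rule ext, simp add: fscale_apply algebra_simps)
    ultimately show ?thesis
      by (simp only: star_ideal.smult)
  qed
  have sum_one: "subst proj_of_sym ((\<Sum>a\<in>UNIV. gen (i,a)) - fone) \<in> bcs_ideal" for i
  proof -
    let ?Z = "foldr fmul (map (\<lambda>a. gen (i,a)) answers) fone"
    let ?S = "\<Sum>a\<in>UNIV. proj_of_sym (i,a)"
    have "?Z + fone \<in> bcs_ideal"
      by (rule star_ideal.rel) (unfold bcs_rels_def, blast)
    moreover have "subst proj_of_sym ((\<Sum>a\<in>UNIV. gen (i,a)) - fone)
        = fscale (-1/2) ((?Z + fone) - (?Z - (fone - fscale 2 ?S)))"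
      by (simp add: subst_diff subst_sum subst_fone subst_gen)
        (rule ext, simp add: fsa_ring_simps fscale_apply algebra_simps)
    ultimately show ?thesis
      using bcs_prod_gen by (simp only: star_ideal.smult star_ideal_diff)
  qed
  have orthogonal: "subst proj_of_sym (fmul (gen (i,a)) (gen (j,b))) \<in> bcs_ideal"
    if "\<not> V a b i j" for i j a b
    using bcs_orthogonal[of V, OF that] by (simp add: subst_fmul subst_gen)
  show ?thesis
    using assms unfolding sync_rels_def
    by (blast intro: idempotent self_adjoint sum_one orthogonal)
qed

lemma subst_sym_of_proj_bcs_rels:
  assumes "r \<in> bcs_rels V"
  shows "subst sym_of_proj r \<in> sync_ideal"
proof -
  have self_adjoint: "subst sym_of_proj (gen (i,a) - fstar (gen (i,a))) \<in> sync_ideal" for i a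
  proof -
    have "gen (i,a) - fstar (gen (i,a)) \<in> sync_ideal"
      by (rule star_ideal.rel) (unfold sync_rels_def, blast)
    moreover have "subst sym_of_proj (gen (i,a) - fstar (gen (i,a)))
        = fscale (-2) (gen (i,a) - fstar (gen (i,a)))"
      by (simp add: subst_diff subst_fstar subst_sym_of_proj_gen fsa_ring_simps)
        (rule ext, simp add: fscale_apply algebra_simps)
    ultimately show ?thesis
      by (simp only: star_ideal.smult)
  qed
  have involution: "subst sym_of_proj (fmul (gen (i,a)) (gen (i,a)) - fone) \<in> sync_ideal" for i a
  proof -
    have "fmul (gen (i,a)) (gen (i,a)) - gen (i,a) \<in> sync_ideal"
      by (rule star_ideal.rel) (unfold sync_rels_def, blast)
    moreover have "subst sym_of_proj (fmul (gen (i,a)) (gen (i,a)) - fone)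
        = fscale 4 (fmul (gen (i,a)) (gen (i,a)) - gen (i,a))"
      by (simp add: subst_diff subst_fmul subst_fone subst_sym_of_proj_gen fsa_ring_simps)
        (rule ext, simp add: fscale_apply algebra_simps)
    ultimately show ?thesis
      by (simp only: star_ideal.smult)
  qed
  have orthogonal: "subst sym_of_proj
      (fscale (1/2) (fone + gen (i,a) + gen (j,b) - fmul (gen (i,a)) (gen (j,b))) - fone)
      \<in> sync_ideal"
    if "\<not> V a b i j" for i j a b
  proof -
    have "subst sym_of_proj
        (fscale (1/2) (fone + gen (i,a) + gen (j,b) - fmul (gen (i,a)) (gen (j,b))) - fone)
        = fscale (-2) (fmul (gen (i,a)) (gen (j,b)))"
      by (simp add: subst_diff subst_add subst_fscale subst_fmul subst_fone subst_sym_of_proj_gen fsa_ring_simps)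
        (rule ext, simp add: fscale_apply algebra_simps)
    then show ?thesis
      using sync_orthogonal[of V, OF that] by (simp only: star_ideal.smult)
  qed
  have prod_minus_one:
    "subst sym_of_proj (foldr fmul (map (\<lambda>a. gen (i,a)) answers) fone + fone) \<in> sync_ideal" for i
  proof -
    let ?Z = "foldr fmul (map (\<lambda>a. sym_of_proj (i,a)) answers) fone"
    let ?S = "\<Sum>a\<in>UNIV. gen (i,a)"
    have "?S - fone \<in> sync_ideal"
      by (rule star_ideal.rel) (unfold sync_rels_def, blast)
    moreover have "subst sym_of_proj (foldr fmul (map (\<lambda>a. gen (i,a)) answers) fone + fone)
        = (?Z - (fone - fscale 2 ?S)) - fscale 2 (?S - fone)"
      by (simp add: subst_add subst_foldr_fmul subst_fone subst_gen)
        (rule ext, simp add: fsa_ring_simps fscale_apply algebra_simps)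
    ultimately show ?thesis
      using sync_prod_sym_of_proj by (simp only: star_ideal.smult star_ideal_diff)
  qed
  have commute: "subst sym_of_proj (fmul (gen (i,a)) (gen (i,a')) - fmul (gen (i,a')) (gen (i,a)))
      \<in> sync_ideal" for i a a'
  proof -
    have "fmul (gen (i,a)) (gen (i,a')) - fmul (gen (i,a')) (gen (i,a)) \<in> sync_ideal"
      by (cases "a = a'") (simp_all add: star_ideal.zero star_ideal_diff sync_orthogonal synchronous)
    moreover have "subst sym_of_proj (fmul (gen (i,a)) (gen (i,a')) - fmul (gen (i,a')) (gen (i,a)))
        = fscale 4 (fmul (gen (i,a)) (gen (i,a')) - fmul (gen (i,a')) (gen (i,a)))"
      by (simp add: subst_diff subst_fmul subst_sym_of_proj_gen fsa_ring_simps)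
        (rule ext, simp add: fscale_apply algebra_simps)
    ultimately show ?thesis
      by (simp only: star_ideal.smult)
  qed
  show ?thesis
    using assms unfolding bcs_rels_def
    by (blast intro: self_adjoint involution orthogonal prod_minus_one commute)
qed

end

theorem mainTheorem10:
  fixes V :: "'a::{finite,linorder} \<Rightarrow> 'a \<Rightarrow> 'i::finite \<Rightarrow> 'i \<Rightarrow> bool"
  assumes synchronous: "\<And>a b i. a \<noteq> b \<Longrightarrow> \<not> V a b i i"
  shows "induces_star_iso (star_ideal (sync_rels V)) (star_ideal (bcs_rels V))
           (\<lambda>x. fscale (1/2) (fone - gen x))
           (\<lambda>x. fone - fscale 2 (gen x))"
proof -
  interpret synchronous_game V
    using synchronous by unfold_locales
  have "induces_star_iso (star_ideal (sync_rels V)) (star_ideal (bcs_rels V))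
      proj_of_sym sym_of_proj"
    by (rule induces_star_iso_if_inverse_on_gen)
      (simp_all add: sync_rels_ncpoly bcs_rels_ncpoly subst_proj_of_sym_sync_rels
        subst_sym_of_proj_bcs_rels subst_sym_of_proj_proj_of_sym subst_proj_of_sym_sym_of_proj)
  then show ?thesis
    by (simp add: proj_of_sym_def[abs_def] sym_of_proj_def[abs_def])
qed

end
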